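(* Let $n\geq 2$, $R>0$, $m$ a uniform (rotation-invariant) measure on $S^{n-1}_R$, $f:S^{n-1}_R\to[0,1]$ integrable, and $K:\mathbb{R}\to\mathbb{R}$ non-decreasing, bounded and measurable. Let $\sigma$ be a hyperplane through the origin not containing $r=(R,0,\ldots,0)$. Then for every $x \in S^{n-1}_R$, \[ \left|Kf^\sigma(x) - Kf^\sigma(\sigma x)\right| \geq \left|Kf(x) - Kf(\sigma x)\right|, \] where $Kg(x) = \int_{S^{n-1}_R} K(\langle x,y\rangle) g(y)\,dm(y)$.
   Context: $S^{n-1}_R = \{x\in\mathbb{R}^n:\|x\|=R\}$. Let $v$ be the unit normal of $\sigma$ with $\langle v,r\rangle>0$; $H^+_\sigma = \{x\in S^{n-1}_R : \langle x,v\rangle\geq 0\}$, $H^-_\sigma = \{x\in S^{n-1}_R:\langle x,v\rangle<0\}$; $\sigma x$ is the reflection of $x$ across $\sigma$. The polarization is $f^\sigma(x) = \max\{f(x),f(\sigma x)\}$ for $x\in H^+_\sigma$ and $f^\sigma(x)=\min\{f(x),f(\sigma x)\}$ for $x\in H^-_\sigma$. *)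

theory Defs
  imports "HOL-Analysis.Analysis"
begin

definition uniform_sphere_measure :: "real \<Rightarrow> 'a::euclidean_space measure \<Rightarrow> bool" where
  "uniform_sphere_measure R m \<longleftrightarrow>
     sets m = sets (restrict_space lborel (sphere 0 R)) \<and>
     finite_measure m \<and>
     (\<forall>T. orthogonal_transformation T \<longrightarrow> distr m m T = m)"

text \<open>Reflection across the hyperplane through 0 with unit normal v.\<close>
definition refl_hyp :: "'a::euclidean_space \<Rightarrow> 'a \<Rightarrow> 'a" where
  "refl_hyp v x = x - (2 * (x \<bullet> v)) *\<^sub>R v"

definition polarization :: "'a::euclidean_space \<Rightarrow> ('a \<Rightarrow> real) \<Rightarrow> 'a \<Rightarrow> real" where
  "polarization v f x =
     (if x \<bullet> v \<ge> 0 then max (f x) (f (refl_hyp v x)) else min (f x) (f (refl_hyp v x)))"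

definition Kop :: "'a::euclidean_space measure \<Rightarrow> (real \<Rightarrow> real) \<Rightarrow> ('a \<Rightarrow> real) \<Rightarrow> 'a \<Rightarrow> real" where
  "Kop m K g x = (LINT y|m. K (x \<bullet> y) * g y)"

end

theory Submission
  imports Defs
begin

text \<open>
  Write \<open>\<sigma>\<close> for the reflection and \<open>a(y) = K\<langle>x,y\<rangle> - K\<langle>\<sigma>x,y\<rangle>\<close>. Since \<open>\<sigma>\<close> preserves \<open>m\<close> and
  \<open>a \<circ> \<sigma> = -a\<close>, we get \<open>2 (Kg(x) - Kg(\<sigma>x)) = \<integral> a(y) (g(y) - g(\<sigma>y)) dm(y)\<close> for every \<open>g\<close>.
  Because \<open>\<langle>x,y\<rangle> - \<langle>\<sigma>x,y\<rangle> = 2\<langle>x,v\<rangle>\<langle>y,v\<rangle>\<close> and \<open>K\<close> is monotone, \<open>a(y)\<close> has the sign of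
  \<open>\<langle>x,v\<rangle>\<langle>y,v\<rangle>\<close>, while polarization makes \<open>g(y) - g(\<sigma>y)\<close> carry the sign of \<open>\<langle>y,v\<rangle>\<close>.
  Hence for \<open>g = f\<^sup>\<sigma>\<close> the integrand is \<open>\<plusminus>|a(y) (f(y) - f(\<sigma>y))|\<close> with a sign depending
  only on \<open>x\<close>, and the claim is the triangle inequality for integrals.
\<close>

lemma inner_refl_hyp_left:
  fixes v x y :: "'a::euclidean_space"
  shows "refl_hyp v x \<bullet> y = x \<bullet> refl_hyp v y"
  unfolding refl_hyp_def by (simp add: inner_diff_left inner_diff_right inner_commute)

lemma refl_hyp_refl_hyp:
  fixes v x :: "'a::euclidean_space"
  assumes "norm v = 1"
  shows "refl_hyp v (refl_hyp v x) = x"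
  using assms unfolding refl_hyp_def
  by (simp add: norm_eq_1 inner_diff_left algebra_simps scaleR_diff_left)

lemma inner_refl_hyp_normal:
  fixes v x :: "'a::euclidean_space"
  assumes "norm v = 1"
  shows "refl_hyp v x \<bullet> v = - (x \<bullet> v)"
  using assms unfolding refl_hyp_def by (simp add: norm_eq_1 inner_diff_left)

lemma inner_diff_refl_hyp:
  fixes v x y :: "'a::euclidean_space"
  shows "x \<bullet> y - refl_hyp v x \<bullet> y = 2 * (x \<bullet> v) * (y \<bullet> v)"
  unfolding refl_hyp_def by (simp add: inner_diff_left inner_diff_right inner_commute[of y v])

lemma refl_hyp_fixed:
  fixes v x :: "'a::euclidean_space"
  assumes "x \<bullet> v = 0"
  shows "refl_hyp v x = x"
  using assms unfolding refl_hyp_def by simp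

lemma orthogonal_transformation_refl_hyp:
  fixes v :: "'a::euclidean_space"
  assumes "norm v = 1"
  shows "orthogonal_transformation (refl_hyp v)"
proof -
  have "linear (refl_hyp v)" unfolding refl_hyp_def
    by (intro linearI) (simp_all add: inner_add_left algebra_simps scaleR_add_left)
  moreover have "refl_hyp v a \<bullet> refl_hyp v b = a \<bullet> b" for a b
    using assms unfolding refl_hyp_def
    by (simp add: norm_eq_1 inner_diff_left inner_diff_right inner_commute algebra_simps)
  ultimately show ?thesis unfolding orthogonal_transformation_def by blast
qed

lemma polarization_diff_refl_hyp:
  fixes v y :: "'a::euclidean_space"
  assumes "norm v = 1"
  shows "polarization v f y - polarization v f (refl_hyp v y)
           = sgn (y \<bullet> v) * \<bar>f y - f (refl_hyp v y)\<bar>"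
  using refl_hyp_fixed[of y v] inner_refl_hyp_normal[OF assms, of y] refl_hyp_refl_hyp[OF assms, of y]
  unfolding polarization_def by (cases "y \<bullet> v" rule: linorder_cases) auto

lemma kernel_diff_mult_sgn:
  fixes v x y :: "'a::euclidean_space" and K :: "real \<Rightarrow> real"
  assumes "mono K"
  shows "(K (x \<bullet> y) - K (refl_hyp v x \<bullet> y)) * sgn (y \<bullet> v)
           = (if 0 \<le> x \<bullet> v then 1 else -1) * \<bar>K (x \<bullet> y) - K (refl_hyp v x \<bullet> y)\<bar>"
proof -
  have diff: "x \<bullet> y - refl_hyp v x \<bullet> y = 2 * (x \<bullet> v) * (y \<bullet> v)"
    by (rule inner_diff_refl_hyp)
  have "0 \<le> (x \<bullet> v) * (y \<bullet> v) \<Longrightarrow> K (refl_hyp v x \<bullet> y) \<le> K (x \<bullet> y)"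
       "(x \<bullet> v) * (y \<bullet> v) \<le> 0 \<Longrightarrow> K (x \<bullet> y) \<le> K (refl_hyp v x \<bullet> y)"
    using diff assms by (auto intro!: monoD[OF assms])
  moreover have "(x \<bullet> v) * (y \<bullet> v) = 0 \<Longrightarrow> K (x \<bullet> y) = K (refl_hyp v x \<bullet> y)"
    using diff by (metis eq_iff_diff_eq_0 mult_eq_0_iff)
  ultimately show ?thesis
    by (cases "x \<bullet> v" "0::real" rule: linorder_cases; cases "y \<bullet> v" "0::real" rule: linorder_cases)
       (auto simp: zero_le_mult_iff mult_le_0_iff)
qed

lemma integrable_bounded_mult:
  fixes f g :: "'b \<Rightarrow> real"
  assumes "integrable M f" "g \<in> borel_measurable M" "\<And>y. y \<in> space M \<Longrightarrow> \<bar>g y\<bar> \<le> B"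
  shows "integrable M (\<lambda>y. g y * f y)"
proof (rule Bochner_Integration.integrable_bound)
  show "integrable M (\<lambda>y. B * \<bar>f y\<bar>)"
    using assms(1) by auto
  show "(\<lambda>y. g y * f y) \<in> borel_measurable M"
    using assms(1,2) by measurable
  show "AE y in M. norm (g y * f y) \<le> norm (B * \<bar>f y\<bar>)"
  proof (rule AE_I2)
    fix y assume "y \<in> space M"
    then have "\<bar>g y\<bar> \<le> \<bar>B\<bar>"
      using assms(3) by force
    then show "norm (g y * f y) \<le> norm (B * \<bar>f y\<bar>)"
      by (simp add: abs_mult mult_right_mono)
  qed
qed

lemma integrable_compose_distr_eq:
  fixes f :: "'b \<Rightarrow> real"
  assumes "T \<in> measurable M M" "distr M M T = M" "integrable M f"
  shows "integrable M (\<lambda>y. f (T y))"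
  using integrable_distr_eq[OF assms(1), of f] assms(2,3) by auto

lemma integral_mult_diff_reflect:
  fixes a g :: "'b \<Rightarrow> real"
  assumes T: "T \<in> measurable M M" and invariant: "distr M M T = M"
    and antisymmetric: "\<And>y. y \<in> space M \<Longrightarrow> a (T y) = - a y"
    and integrable: "integrable M (\<lambda>y. a y * g y)"
  shows "2 * (LINT y|M. a y * g y) = (LINT y|M. a y * (g y - g (T y)))"
proof -
  have meas: "(\<lambda>y. a y * g y) \<in> borel_measurable M"
    using integrable by auto
  have "integrable M (\<lambda>y. a y * g (T y)) \<longleftrightarrow> integrable M (\<lambda>y. - (a (T y) * g (T y)))"
    by (rule Bochner_Integration.integrable_cong) (auto simp: antisymmetric)
  then have integrable_T: "integrable M (\<lambda>y. a y * g (T y))"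
    using integrable_compose_distr_eq[OF T invariant integrable] by auto
  have "(LINT y|M. a y * g y) = (LINT y|M. a (T y) * g (T y))"
    using integral_distr[OF T meas] invariant by simp
  also have "\<dots> = (LINT y|M. - (a y * g (T y)))"
    by (rule Bochner_Integration.integral_cong) (auto simp: antisymmetric)
  finally have "(LINT y|M. a y * g y) = - (LINT y|M. a y * g (T y))"
    by simp
  then show ?thesis
    using integrable integrable_T by (simp add: right_diff_distrib)
qed

lemma borel_measurable_of_borel:
  assumes "(\<lambda>y. y) \<in> borel_measurable M" "h \<in> borel_measurable borel"
  shows "h \<in> borel_measurable M"
  using measurable_compose[OF assms] by simp

lemma integrable_kernel_mult:
  fixes M :: "'a::euclidean_space measure" and K :: "real \<Rightarrow> real"
  assumes id: "(\<lambda>y. y) \<in> borel_measurable M" and g: "integrable M g"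
    and K_meas: "K \<in> borel_measurable borel" and K_bdd: "bounded (range K)"
  shows "integrable M (\<lambda>y. K (x \<bullet> y) * g y)"
proof -
  obtain B where "\<And>t. \<bar>K t\<bar> \<le> B"
    using K_bdd unfolding bounded_iff by auto
  moreover have "(\<lambda>y. K (x \<bullet> y)) \<in> borel_measurable M"
    by (rule borel_measurable_of_borel[OF id]) (use K_meas in measurable)
  ultimately show ?thesis
    using integrable_bounded_mult[OF g] by blast
qed

lemma Kop_diff:
  fixes M :: "'a::euclidean_space measure" and K :: "real \<Rightarrow> real"
  assumes "(\<lambda>y. y) \<in> borel_measurable M" "integrable M g"
    "K \<in> borel_measurable borel" "bounded (range K)"
  shows "Kop M K g x - Kop M K g z = (LINT y|M. (K (x \<bullet> y) - K (z \<bullet> y)) * g y)"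
  unfolding Kop_def left_diff_distrib
  using integrable_kernel_mult[OF assms] by simp

lemma integrable_polarization:
  fixes M :: "'a::euclidean_space measure"
  assumes id: "(\<lambda>y. y) \<in> borel_measurable M"
    and refl_meas: "refl_hyp v \<in> measurable M M" and refl_inv: "distr M M (refl_hyp v) = M"
    and f: "integrable M f"
  shows "integrable M (polarization v f)"
proof (rule Bochner_Integration.integrable_bound)
  have f_refl: "integrable M (\<lambda>y. f (refl_hyp v y))"
    by (rule integrable_compose_distr_eq[OF refl_meas refl_inv f])
  then show "integrable M (\<lambda>y. \<bar>f y\<bar> + \<bar>f (refl_hyp v y)\<bar>)"
    using f by auto
  have "(\<lambda>y. y \<bullet> v) \<in> borel_measurable M"
    by (rule borel_measurable_of_borel[OF id]) measurable
  then show "polarization v f \<in> borel_measurable M"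
    unfolding polarization_def using f f_refl by measurable
  show "AE y in M. norm (polarization v f y) \<le> norm (\<bar>f y\<bar> + \<bar>f (refl_hyp v y)\<bar>)"
    by (auto simp: polarization_def)
qed

lemma Kop_polarization_reflect_diff_ge:
  fixes M :: "'a::euclidean_space measure" and K :: "real \<Rightarrow> real"
  assumes id: "(\<lambda>y. y) \<in> borel_measurable M"
    and refl_meas: "refl_hyp v \<in> measurable M M" and refl_inv: "distr M M (refl_hyp v) = M"
    and v: "norm v = 1" and f: "integrable M f"
    and K_mono: "mono K" and K_meas: "K \<in> borel_measurable borel" and K_bdd: "bounded (range K)"
  shows "\<bar>Kop M K f x - Kop M K f (refl_hyp v x)\<bar>
           \<le> \<bar>Kop M K (polarization v f) x - Kop M K (polarization v f) (refl_hyp v x)\<bar>"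
proof -
  define a where "a y = K (x \<bullet> y) - K (refl_hyp v x \<bullet> y)" for y
  define c :: real where "c = (if 0 \<le> x \<bullet> v then 1 else -1)"
  have a_refl: "a (refl_hyp v y) = - a y" for y
    unfolding a_def inner_refl_hyp_left[of v x] refl_hyp_refl_hyp[OF v] by simp
  have double_diff: "2 * (Kop M K g x - Kop M K g (refl_hyp v x))
                       = (LINT y|M. a y * (g y - g (refl_hyp v y)))" if g: "integrable M g" for g
  proof -
    have "integrable M (\<lambda>y. a y * g y)"
      unfolding a_def left_diff_distrib using integrable_kernel_mult[OF id g K_meas K_bdd] by auto
    then have "2 * (LINT y|M. a y * g y) = (LINT y|M. a y * (g y - g (refl_hyp v y)))"
      by (rule integral_mult_diff_reflect[where a = a, OF refl_meas refl_inv a_refl])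
    moreover have "Kop M K g x - Kop M K g (refl_hyp v x) = (LINT y|M. a y * g y)"
      unfolding a_def by (rule Kop_diff[OF id g K_meas K_bdd])
    ultimately show ?thesis
      by simp
  qed
  have "a y * (polarization v f y - polarization v f (refl_hyp v y))
          = c * \<bar>a y * (f y - f (refl_hyp v y))\<bar>" for y
    unfolding polarization_diff_refl_hyp[OF v] mult.assoc[symmetric] a_def c_def
    by (simp add: kernel_diff_mult_sgn[OF K_mono] abs_mult)
  then have pol: "\<bar>LINT y|M. a y * (polarization v f y - polarization v f (refl_hyp v y))\<bar>
                  = (LINT y|M. \<bar>a y * (f y - f (refl_hyp v y))\<bar>)"
    by (simp add: c_def abs_mult)
  have "2 * \<bar>Kop M K f x - Kop M K f (refl_hyp v x)\<bar>
          = \<bar>LINT y|M. a y * (f y - f (refl_hyp v y))\<bar>"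
    using double_diff[OF f] by (metis abs_mult abs_numeral)
  also have "\<dots> \<le> (LINT y|M. \<bar>a y * (f y - f (refl_hyp v y))\<bar>)"
    using integral_norm_bound[of M "\<lambda>y. a y * (f y - f (refl_hyp v y))"] by simp
  also have "\<dots> = 2 * \<bar>Kop M K (polarization v f) x - Kop M K (polarization v f) (refl_hyp v x)\<bar>"
    using double_diff[OF integrable_polarization[OF id refl_meas refl_inv f]] pol
    by (metis abs_mult abs_numeral)
  finally show ?thesis
    by simp
qed

lemma uniform_sphere_measure_borel_id:
  fixes m :: "'a::euclidean_space measure"
  assumes "uniform_sphere_measure R m"
  shows "(\<lambda>y. y) \<in> borel_measurable m"
proof -
  have "sets m = sets (restrict_space lborel (sphere 0 R))"
    using assms unfolding uniform_sphere_measure_def by simp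
  moreover have "(\<lambda>y. y) \<in> borel_measurable (restrict_space lborel (sphere (0::'a) R))"
    by (rule measurable_restrict_space1) simp
  ultimately show ?thesis
    using measurable_cong_sets by blast
qed

lemma uniform_sphere_measure_orthogonal_transformation:
  fixes m :: "'a::euclidean_space measure"
  assumes m: "uniform_sphere_measure R m" and T: "orthogonal_transformation T"
  shows "T \<in> measurable m m" and "distr m m T = m"
proof -
  have sets_m: "sets m = sets (restrict_space lborel (sphere 0 R))"
    using m unfolding uniform_sphere_measure_def by simp
  have "T \<in> borel_measurable borel"
    using T by (intro borel_measurable_continuous_onI linear_continuous_on)
       (simp add: orthogonal_transformation_linear linear_linear)
  moreover have "T ` sphere 0 R \<subseteq> sphere 0 R"
    using T by (auto simp: orthogonal_transformation)
  ultimately have "T \<in> measurable (restrict_space lborel (sphere 0 R)) (restrict_space lborel (sphere 0 R))"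
    by (intro measurable_restrict_space3) auto
  then show "T \<in> measurable m m"
    using measurable_cong_sets[OF sets_m sets_m] by blast
  show "distr m m T = m"
    using m T unfolding uniform_sphere_measure_def by blast
qed

text \<open>Only \<open>m\<close>, \<open>f\<close>, \<open>K\<close> and \<open>norm v = 1\<close> enter: the inequality holds for every \<open>x\<close>,
  whatever the dimension, the range of \<open>f\<close> or the position of \<open>r = R e\<close>.\<close>

theorem lemma11:
  fixes R :: real and m :: "'a::euclidean_space measure"
    and f :: "'a \<Rightarrow> real" and K :: "real \<Rightarrow> real"
    and e v :: 'a
  assumes dim: "DIM('a) \<ge> 2"
    and R: "R > 0"
    and m: "uniform_sphere_measure R m"
    and f_range: "\<forall>x\<in>sphere 0 R. 0 \<le> f x \<and> f x \<le> 1"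
    and f_int: "integrable m f"
    and K_mono: "mono K"
    and K_bdd: "bounded (range K)"
    and K_meas: "K \<in> borel_measurable borel"
    and e: "e \<in> Basis"
    and v_unit: "norm v = 1"
    and v_r: "v \<bullet> (R *\<^sub>R e) > 0"
  shows "\<forall>x\<in>sphere 0 R.
    \<bar>Kop m K (polarization v f) x - Kop m K (polarization v f) (refl_hyp v x)\<bar>
      \<ge> \<bar>Kop m K f x - Kop m K f (refl_hyp v x)\<bar>"
proof
  fix x :: 'a
  have refl: "orthogonal_transformation (refl_hyp v)"
    by (rule orthogonal_transformation_refl_hyp[OF v_unit])
  show "\<bar>Kop m K (polarization v f) x - Kop m K (polarization v f) (refl_hyp v x)\<bar>
          \<ge> \<bar>Kop m K f x - Kop m K f (refl_hyp v x)\<bar>"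
    by (rule Kop_polarization_reflect_diff_ge[OF uniform_sphere_measure_borel_id[OF m]
          uniform_sphere_measure_orthogonal_transformation[OF m refl] v_unit f_int K_mono K_meas K_bdd])
qed

end
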